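(* Let $G$ and $\ell$ be as in the construction described in the context. If $G$ has an acyclic matching of size at least $\ell$, then for some $q\in[t]$ the instance $(X,\mathcal{S}_q)$ of \textsc{Exact-3-Cover} is a Yes-instance.
   Context: Construction. Let $n=3c$ with $c\in\mathbb{N}$, $X=[n]$, and let $(X,\mathcal{S}_1),\dots,(X,\mathcal{S}_t)$ be instances of \textsc{Exact-3-Cover} (each $\mathcal{S}_i$ a collection of 3-element subsets of $X$, all $\mathcal{S}_i$ of the same size $m$ and pairwise distinct as collections). An instance $(X,\mathcal{S})$ is a Yes-instance if some subcollection of $\mathcal{S}$ covers every element of $X$ exactly once. Let $\mathcal{C}=\bigcup_{i\in[t]}\mathcal{S}_i=\{s_1,\dots,s_{|\mathcal{C}|}\}$ (distinct 3-sets). The graph $G$: a vertex set $X'=\{v_a:a\in X\}$; for each $s_j=\{a,b,c\}\in\mathcal{C}$ a set gadget $Q_j$ with vertices $u_{ja},u_{jb},u_{jc}$ (interface vertices), $u_j,w_j,u_j',w_j'$, where each of $u_j,w_j$ is adjacent to each of $u_{ja},u_{jb},u_{jc}$, and additionally $u_jw_j,u_ju_j',w_jw_j'$ are edges; for each $s_j\in\mathcal{C}$ and $d\in s_j$ the edge $u_{jd}v_d$ (cross edges); a vertex $p$ and vertices $P=\{p_1,\dots,p_t\}$ with edges $pp_i$ for all $i$; and for each $i\in[t]$ and each $s_j\in\mathcal{C}\setminus\mathcal{S}_i$, edges from $p_i$ to the three interface vertices of $Q_j$. There are no other edges. Set $\ell=2|\mathcal{C}|+\frac{2n}{3}+1$.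 A matching $M$ is acyclic if the subgraph induced by the endpoints of its edges is a forest. *)

theory Defs
  imports Main
begin

text \<open>Vertices of the constructed graph G. Set gadgets are indexed by the
3-set s itself (an element of C), which is equivalent to indexing by j.\<close>
datatype vtx =
    Xv nat
  | Iv "nat set" nat       (* interface vertex u_{j a} of gadget Q_j, s_j = s *)
  | Uv "nat set"
  | Wv "nat set"
  | U'v "nat set"
  | W'v "nat set"
  | Pv
  | Piv nat

definition ground :: "nat \<Rightarrow> nat set" where
  "ground c = {1..3*c}"

definition unionC :: "nat \<Rightarrow> (nat \<Rightarrow> nat set set) \<Rightarrow> nat set set" where
  "unionC t S = (\<Union>i\<in>{1..t}. S i)"

definition G_edges :: "nat \<Rightarrow> (nat \<Rightarrow> nat set set) \<Rightarrow> vtx set set" where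
  "G_edges t S =
     (\<Union>s\<in>unionC t S. \<Union>a\<in>s. {{Iv s a, Uv s}, {Iv s a, Wv s}})
   \<union> (\<Union>s\<in>unionC t S. {{Uv s, Wv s}, {Uv s, U'v s}, {Wv s, W'v s}})
   \<union> (\<Union>s\<in>unionC t S. \<Union>a\<in>s. {{Iv s a, Xv a}})
   \<union> (\<Union>i\<in>{1..t}. {{Pv, Piv i}})
   \<union> (\<Union>i\<in>{1..t}. \<Union>s\<in>unionC t S - S i. \<Union>a\<in>s. {{Piv i, Iv s a}})"

definition is_matching :: "'a set set \<Rightarrow> 'a set set \<Rightarrow> bool" where
  "is_matching E M \<longleftrightarrow> M \<subseteq> E \<and> (\<forall>e\<in>M. \<forall>f\<in>M. e \<noteq> f \<longrightarrow> e \<inter> f = {})"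

definition has_cycle :: "'a set set \<Rightarrow> bool" where
  "has_cycle E \<longleftrightarrow> (\<exists>vs. length vs \<ge> 3 \<and> distinct vs \<and>
      (\<forall>i<length vs. {vs ! i, vs ! ((i + 1) mod length vs)} \<in> E))"

definition induced_edges :: "'a set set \<Rightarrow> 'a set \<Rightarrow> 'a set set" where
  "induced_edges E U = {e \<in> E. e \<subseteq> U}"

definition acyclic_matching :: "'a set set \<Rightarrow> 'a set set \<Rightarrow> bool" where
  "acyclic_matching E M \<longleftrightarrow> is_matching E M \<and> \<not> has_cycle (induced_edges E (\<Union>M))"

definition x3c_yes :: "nat set \<Rightarrow> nat set set \<Rightarrow> bool" where
  "x3c_yes X S \<longleftrightarrow> (\<exists>T\<subseteq>S. \<forall>a\<in>X. \<exists>!s. s \<in> T \<and> a \<in> s)"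

end

theory Submission
  imports Defs
begin

text \<open>Charge every edge of an acyclic matching M, except the one at p, to a set gadget Q_s:
the edges at u_s or w_s, the cross edges u_{sa} v_a, and the edges p_i u_{sa}. Acyclicity
forbids the short cycles through a gadget (the triangle u_{sa} u_s w_s, and 4-cycles through
p_i or through u_s or w_s), and a case analysis shows that a gadget carrying x cross edges is
charged at most 2 + 2x/3 edges, with equality only if x = 0, or x = 3 and u_s or w_s is matched.
Cross edges are disjoint at X', so |M| <= 1 + 2|C| + 2n/3 = l. Hence a matching of size l is
tight everywhere: p p_q is matched for some q, and the gadgets carrying cross edges cover X
exactly once. Each of them lies in S_q, for otherwise p_q, two of its interface vertices and a
matched u_s or w_s would span a 4-cycle.\<close>

lemma has_cycle_triangle:
  assumes "distinct [a, b, c]" "{a, b} \<in> F" "{b, c} \<in> F" "{c, a} \<in> F"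
  shows "has_cycle F"
  unfolding has_cycle_def
proof (intro exI[of _ "[a, b, c]"] conjI allI impI)
  fix i assume "i < length [a, b, c]"
  then have "i = 0 \<or> i = 1 \<or> i = 2" by auto
  then show "{[a, b, c] ! i, [a, b, c] ! ((i + 1) mod length [a, b, c])} \<in> F"
    using assms by (elim disjE) simp_all
qed (use assms in simp_all)

lemma has_cycle_square:
  assumes "distinct [a, b, c, d]" "{a, b} \<in> F" "{b, c} \<in> F" "{c, d} \<in> F" "{d, a} \<in> F"
  shows "has_cycle F"
  unfolding has_cycle_def
proof (intro exI[of _ "[a, b, c, d]"] conjI allI impI)
  fix i assume "i < length [a, b, c, d]"
  then have "i = 0 \<or> i = 1 \<or> i = 2 \<or> i = 3" by auto
  then show "{[a, b, c, d] ! i, [a, b, c, d] ! ((i + 1) mod length [a, b, c, d])} \<in> F"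
    using assms by (elim disjE) simp_all
qed (use assms in simp_all)

lemma induced_edgesI: "e \<in> E \<Longrightarrow> e \<subseteq> U \<Longrightarrow> e \<in> induced_edges E U"
  by (simp add: induced_edges_def)

lemma matching_edges_eq:
  "is_matching E M \<Longrightarrow> e \<in> M \<Longrightarrow> f \<in> M \<Longrightarrow> v \<in> e \<Longrightarrow> v \<in> f \<Longrightarrow> e = f"
  unfolding is_matching_def by blast

lemma card_matching_edges_at_le_1:
  assumes "is_matching E M"
  shows "card {e \<in> M. v \<in> e} \<le> 1"
proof (cases "finite {e \<in> M. v \<in> e}")
  case True
  then show ?thesis
    using card_le_Suc0_iff_eq matching_edges_eq[OF assms] by fastforce
qed simp

lemma saturated_if_card_edges_at: "card {e \<in> M. v \<in> e} \<noteq> 0 \<Longrightarrow> v \<in> \<Union>M"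
  by (metis (no_types, lifting) UnionI card.empty equals0I mem_Collect_eq)

lemma x3c_yesI:
  assumes "T \<subseteq> S" "\<Union>T = X" "\<And>s s'. s \<in> T \<Longrightarrow> s' \<in> T \<Longrightarrow> s \<inter> s' \<noteq> {} \<Longrightarrow> s = s'"
  shows "x3c_yes X S"
  unfolding x3c_yes_def
proof (intro exI[of _ T] conjI ballI)
  fix a assume "a \<in> X"
  then obtain s where "s \<in> T" "a \<in> s" using assms(2) by blast
  then show "\<exists>!s. s \<in> T \<and> a \<in> s" using assms(3) by blast
qed (rule assms(1))

lemma G_edges_Iv_Uv: "s \<in> unionC t S \<Longrightarrow> a \<in> s \<Longrightarrow> {Iv s a, Uv s} \<in> G_edges t S"
  unfolding G_edges_def by (intro UnI1) auto

lemma G_edges_Iv_Wv: "s \<in> unionC t S \<Longrightarrow> a \<in> s \<Longrightarrow> {Iv s a, Wv s} \<in> G_edges t S"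
  unfolding G_edges_def by (intro UnI1) auto

lemma G_edges_Uv_Wv: "s \<in> unionC t S \<Longrightarrow> {Uv s, Wv s} \<in> G_edges t S"
  unfolding G_edges_def by (rule UnI1, rule UnI1, rule UnI1, rule UnI2) auto

lemma G_edges_Piv_Iv:
  "i \<in> {1..t} \<Longrightarrow> s \<in> unionC t S \<Longrightarrow> s \<notin> S i \<Longrightarrow> a \<in> s \<Longrightarrow> {Piv i, Iv s a} \<in> G_edges t S"
  unfolding G_edges_def by (intro UnI2 UN_I[of i] UN_I[of s] UN_I[of a]) auto

lemma G_edges_Iv_XvD: "{Iv s a, Xv a'} \<in> G_edges t S \<Longrightarrow> s \<in> unionC t S \<and> a \<in> s"
  unfolding G_edges_def by (auto simp: doubleton_eq_iff)

lemma G_edges_Piv_IvD: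
  "{Piv i, Iv s a} \<in> G_edges t S \<Longrightarrow> i \<in> {1..t} \<and> s \<in> unionC t S \<and> s \<notin> S i \<and> a \<in> s"
  unfolding G_edges_def by (auto simp: doubleton_eq_iff)

lemma G_edges_PvD: "e \<in> G_edges t S \<Longrightarrow> Pv \<in> e \<Longrightarrow> \<exists>i\<in>{1..t}. e = {Pv, Piv i}"
  unfolding G_edges_def by auto

lemma G_edges_cases:
  "e \<in> G_edges t S \<Longrightarrow> Pv \<in> e \<or> (\<exists>s\<in>unionC t S. Uv s \<in> e \<or> Wv s \<in> e
     \<or> (\<exists>a. e = {Iv s a, Xv a}) \<or> (\<exists>i a. e = {Piv i, Iv s a}))"
  unfolding G_edges_def by blast

lemma finite_G_edges:
  assumes "finite (unionC t S)" "\<And>s. s \<in> unionC t S \<Longrightarrow> finite s"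
  shows "finite (G_edges t S)"
  unfolding G_edges_def using assms by (intro finite_UnI finite_UN_I) auto

definition cross_matched :: "vtx set set \<Rightarrow> nat set \<Rightarrow> nat set" where
  "cross_matched M s = {a. {Iv s a, Xv a} \<in> M}"

definition P_edges :: "vtx set set \<Rightarrow> nat set \<Rightarrow> vtx set set" where
  "P_edges M s = {e \<in> M. \<exists>i a. e = {Piv i, Iv s a}}"

definition gadget_edges :: "vtx set set \<Rightarrow> nat set \<Rightarrow> vtx set set" where
  "gadget_edges M s = {e \<in> M. Uv s \<in> e} \<union> {e \<in> M. Wv s \<in> e}
     \<union> (\<lambda>a. {Iv s a, Xv a}) ` cross_matched M s \<union> P_edges M s"

lemma gadget_count_arith:
  fixes k u w x y :: nat
  assumes "k \<le> u + w + x + y" "x + y \<le> 3" "u \<le> 1" "w \<le> 1" "y \<le> 1"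
    "u = 1 \<and> w = 1 \<longrightarrow> x = 0 \<and> y = 0" "y = 1 \<and> (u = 1 \<or> w = 1) \<longrightarrow> x = 0"
  shows "3 * k \<le> 6 + 2 * x \<and> (3 * k = 6 + 2 * x \<longrightarrow> x = 0 \<or> (x = 3 \<and> (u = 1 \<or> w = 1)))"
proof -
  have "u = 0 \<or> u = 1" "w = 0 \<or> w = 1" "y = 0 \<or> y = 1" using assms by auto
  then show ?thesis using assms by (elim disjE) simp_all
qed

locale G_acyclic_matching =
  fixes t :: nat and S :: "nat \<Rightarrow> nat set set" and M :: "vtx set set"
  assumes acyclic: "acyclic_matching (G_edges t S) M"
    and finite_M: "finite M"
    and card_3: "s \<in> unionC t S \<Longrightarrow> card s = 3"
begin

lemma matching: "is_matching (G_edges t S) M"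
  using acyclic by (simp add: acyclic_matching_def)

lemma M_subset: "M \<subseteq> G_edges t S"
  using matching by (simp add: is_matching_def)

lemma edges_eq: "e \<in> M \<Longrightarrow> f \<in> M \<Longrightarrow> v \<in> e \<Longrightarrow> v \<in> f \<Longrightarrow> e = f"
  using matching_edges_eq[OF matching] .

lemma no_triangle:
  assumes "distinct [a, b, c]" "{a, b} \<in> G_edges t S" "{b, c} \<in> G_edges t S" "{c, a} \<in> G_edges t S"
    and "a \<in> \<Union>M" "b \<in> \<Union>M" "c \<in> \<Union>M"
  shows False
proof -
  have "has_cycle (induced_edges (G_edges t S) (\<Union>M))"
    by (rule has_cycle_triangle[OF assms(1)]) (use assms in \<open>auto intro!: induced_edgesI\<close>)
  then show False using acyclic by (simp add: acyclic_matching_def)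
qed

lemma no_square:
  assumes "distinct [a, b, c, d]" "{a, b} \<in> G_edges t S" "{b, c} \<in> G_edges t S"
    "{c, d} \<in> G_edges t S" "{d, a} \<in> G_edges t S"
    and "a \<in> \<Union>M" "b \<in> \<Union>M" "c \<in> \<Union>M" "d \<in> \<Union>M"
  shows False
proof -
  have "has_cycle (induced_edges (G_edges t S) (\<Union>M))"
    by (rule has_cycle_square[OF assms(1)]) (use assms in \<open>auto intro!: induced_edgesI\<close>)
  then show False using acyclic by (simp add: acyclic_matching_def)
qed

lemma cross_matched_subset: "cross_matched M s \<subseteq> s"
  using M_subset G_edges_Iv_XvD unfolding cross_matched_def by blast

lemma cross_matched_unique:
  assumes "a \<in> cross_matched M s" "a \<in> cross_matched M s'"
  shows "s = s'"
proof -
  have "{Iv s a, Xv a} = {Iv s' a, Xv a}"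
    using assms by (intro edges_eq[of _ _ "Xv a"]) (auto simp: cross_matched_def)
  then show ?thesis by (simp add: doubleton_eq_iff)
qed

lemma P_edgesE:
  assumes "e \<in> P_edges M s"
  obtains i a where "e = {Piv i, Iv s a}" "e \<in> M" "i \<in> {1..t}" "s \<in> unionC t S" "s \<notin> S i" "a \<in> s"
  using assms M_subset G_edges_Piv_IvD unfolding P_edges_def by blast

lemma P_edge_not_cross_matched:
  assumes "{Piv i, Iv s a} \<in> M"
  shows "a \<notin> cross_matched M s"
proof
  assume "a \<in> cross_matched M s"
  then have "{Piv i, Iv s a} = {Iv s a, Xv a}"
    using assms by (intro edges_eq[of _ _ "Iv s a"]) (auto simp: cross_matched_def)
  then show False by (simp add: doubleton_eq_iff)
qed

lemma card_P_edges_le_1: "card (P_edges M s) \<le> 1"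
proof -
  have "e = f" if e: "e \<in> P_edges M s" and f: "f \<in> P_edges M s" for e f
  proof (rule ccontr)
    assume "e \<noteq> f"
    obtain i a where ia: "e = {Piv i, Iv s a}" "e \<in> M" "i \<in> {1..t}" "s \<in> unionC t S" "s \<notin> S i" "a \<in> s"
      using e by (rule P_edgesE)
    obtain j b where jb: "f = {Piv j, Iv s b}" "f \<in> M" "j \<in> {1..t}" "s \<notin> S j" "b \<in> s"
      using f by (rule P_edgesE)
    have "a \<noteq> b" "i \<noteq> j"
      using \<open>e \<noteq> f\<close> edges_eq[OF ia(2) jb(2)] ia(1) jb(1) by auto
    moreover have "{Iv s a, Piv i} \<in> G_edges t S" "{Iv s b, Piv j} \<in> G_edges t S"
      using ia(1,2) jb(1,2) M_subset by (auto simp: insert_commute)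
    moreover have "{Piv i, Iv s b} \<in> G_edges t S" "{Piv j, Iv s a} \<in> G_edges t S"
      using G_edges_Piv_Iv ia(3-6) jb(3-5) by auto
    moreover have "Iv s a \<in> \<Union>M" "Piv i \<in> \<Union>M" "Iv s b \<in> \<Union>M" "Piv j \<in> \<Union>M"
      using ia(1,2) jb(1,2) by auto
    ultimately show False
      by (intro no_square[of "Iv s a" "Piv i" "Iv s b" "Piv j"]) auto
  qed
  moreover have "finite (P_edges M s)" using finite_M by (simp add: P_edges_def)
  ultimately show ?thesis by (simp add: card_le_Suc0_iff_eq)
qed

lemma finite_gadget_set: "s \<in> unionC t S \<Longrightarrow> finite s"
  using card_3 card.infinite by fastforce

lemma card_cross_matched_P_edges:
  assumes s: "s \<in> unionC t S"
  shows "card (cross_matched M s) + card (P_edges M s) \<le> 3"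
proof (cases "P_edges M s = {}")
  case True
  have "card (cross_matched M s) \<le> card s"
    using card_mono[OF finite_gadget_set[OF s] cross_matched_subset] .
  then show ?thesis using True card_3[OF s] by simp
next
  case False
  then obtain i a where "{Piv i, Iv s a} \<in> M" "a \<in> s"
    by (metis P_edgesE equals0I)
  then have "cross_matched M s \<subseteq> s - {a}"
    using cross_matched_subset P_edge_not_cross_matched by blast
  then have "card (cross_matched M s) \<le> card (s - {a})"
    using finite_gadget_set[OF s] by (intro card_mono) auto
  also have "\<dots> = 2" using card_3[OF s] \<open>a \<in> s\<close> by simp
  finally show ?thesis using card_P_edges_le_1[of s] by simp
qed

lemma centres_saturated_interface_free:
  assumes s: "s \<in> unionC t S" and "a \<in> s" "Uv s \<in> \<Union>M" "Wv s \<in> \<Union>M"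
  shows "Iv s a \<notin> \<Union>M"
proof
  assume "Iv s a \<in> \<Union>M"
  moreover have "{Iv s a, Uv s} \<in> G_edges t S" "{Uv s, Wv s} \<in> G_edges t S" "{Wv s, Iv s a} \<in> G_edges t S"
    using G_edges_Iv_Uv G_edges_Uv_Wv G_edges_Iv_Wv s \<open>a \<in> s\<close> by (auto simp: insert_commute)
  ultimately show False
    using assms by (intro no_triangle[of "Iv s a" "Uv s" "Wv s"]) auto
qed

lemma saturated_Piv_gadget_in_instance:
  assumes s: "s \<in> unionC t S" and i: "i \<in> {1..t}" "Piv i \<in> \<Union>M"
    and z: "z \<in> {Uv s, Wv s}" "z \<in> \<Union>M"
    and ab: "a \<in> s" "b \<in> s" "a \<noteq> b" "Iv s a \<in> \<Union>M" "Iv s b \<in> \<Union>M"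
  shows "s \<in> S i"
proof (rule ccontr)
  assume "s \<notin> S i"
  then have "{Piv i, Iv s a} \<in> G_edges t S" "{Iv s b, Piv i} \<in> G_edges t S"
    using G_edges_Piv_Iv[OF i(1) s] ab by (auto simp: insert_commute)
  moreover have "{Iv s a, z} \<in> G_edges t S" "{z, Iv s b} \<in> G_edges t S"
    using z(1) G_edges_Iv_Uv G_edges_Iv_Wv s ab(1,2) by (auto simp: insert_commute)
  ultimately show False
    using z ab i by (intro no_square[of "Piv i" "Iv s a" z "Iv s b"]) auto
qed

lemma P_edge_centre_saturated_cross_free:
  assumes e: "e \<in> P_edges M s" and z: "z \<in> {Uv s, Wv s}" "z \<in> \<Union>M"
  shows "cross_matched M s = {}"
proof (rule ccontr)
  assume "cross_matched M s \<noteq> {}"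
  then obtain b where b: "b \<in> cross_matched M s" by blast
  obtain i a where ia: "e = {Piv i, Iv s a}" "e \<in> M" "i \<in> {1..t}" "s \<in> unionC t S" "s \<notin> S i" "a \<in> s"
    using e by (rule P_edgesE)
  have "a \<noteq> b" using b P_edge_not_cross_matched ia(1,2) by blast
  moreover have "Iv s b \<in> \<Union>M" "b \<in> s" using b cross_matched_subset by (auto simp: cross_matched_def)
  ultimately have "s \<in> S i"
    using ia z by (intro saturated_Piv_gadget_in_instance[of s i z a b]) auto
  with ia(5) show False ..
qed

lemma centres_saturated_gadget_free:
  assumes s: "s \<in> unionC t S" and "Uv s \<in> \<Union>M" "Wv s \<in> \<Union>M"
  shows "cross_matched M s = {}" "P_edges M s = {}"
proof -
  have free: "Iv s a \<notin> \<Union>M" if "a \<in> s" for a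
    using centres_saturated_interface_free[OF s that] assms(2,3) .
  show "cross_matched M s = {}"
    using free cross_matched_subset by (fastforce simp: cross_matched_def)
  show "P_edges M s = {}"
    using free by (fastforce elim: P_edgesE)
qed

lemma card_gadget_edges_le:
  assumes s: "s \<in> unionC t S"
  shows "card (gadget_edges M s) \<le> card {e \<in> M. Uv s \<in> e} + card {e \<in> M. Wv s \<in> e}
    + card (cross_matched M s) + card (P_edges M s)"
proof -
  have "finite (cross_matched M s)"
    using finite_subset[OF cross_matched_subset finite_gadget_set[OF s]] .
  then have "card ((\<lambda>a. {Iv s a, Xv a}) ` cross_matched M s) \<le> card (cross_matched M s)"
    by (rule card_image_le)
  moreover have "card (gadget_edges M s) \<le> card {e \<in> M. Uv s \<in> e} + card {e \<in> M. Wv s \<in> e}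
      + card ((\<lambda>a. {Iv s a, Xv a}) ` cross_matched M s) + card (P_edges M s)"
    unfolding gadget_edges_def by (intro order.trans[OF card_Un_le] add_mono order.refl)
  ultimately show ?thesis by linarith
qed

lemma card_gadget_edges:
  assumes s: "s \<in> unionC t S"
  defines "x \<equiv> card (cross_matched M s)"
  shows "3 * card (gadget_edges M s) \<le> 6 + 2 * x \<and>
    (3 * card (gadget_edges M s) = 6 + 2 * x \<longrightarrow>
       cross_matched M s = {} \<or> (cross_matched M s = s \<and> (Uv s \<in> \<Union>M \<or> Wv s \<in> \<Union>M)))"
proof -
  define u where "u = card {e \<in> M. Uv s \<in> e}"
  define w where "w = card {e \<in> M. Wv s \<in> e}"
  define y where "y = card (P_edges M s)"
  have u1: "u \<le> 1" and w1: "w \<le> 1"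
    unfolding u_def w_def using card_matching_edges_at_le_1[OF matching] by auto
  have Uv: "Uv s \<in> \<Union>M" if "u = 1"
    using that unfolding u_def by (intro saturated_if_card_edges_at) simp
  have Wv: "Wv s \<in> \<Union>M" if "w = 1"
    using that unfolding w_def by (intro saturated_if_card_edges_at) simp
  have y1: "y \<le> 1" using card_P_edges_le_1 by (simp add: y_def)
  have xy: "x + y \<le> 3" using card_cross_matched_P_edges[OF s] by (simp add: x_def y_def)
  have both_centres: "x = 0 \<and> y = 0" if "u = 1" "w = 1"
    using centres_saturated_gadget_free[OF s] Uv Wv that by (simp add: x_def y_def)
  have P_and_centre: "x = 0" if "y = 1" "u = 1 \<or> w = 1"
  proof -
    obtain e where "e \<in> P_edges M s"
      using \<open>y = 1\<close> unfolding y_def by (metis card.empty equals0I zero_neq_one)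
    moreover have "Uv s \<in> \<Union>M \<or> Wv s \<in> \<Union>M" using that(2) Uv Wv by blast
    ultimately have "cross_matched M s = {}"
      using P_edge_centre_saturated_cross_free by blast
    then show ?thesis by (simp add: x_def)
  qed
  have "card (gadget_edges M s) \<le> u + w + x + y"
    using card_gadget_edges_le[OF s] by (simp add: u_def w_def x_def y_def)
  then have "3 * card (gadget_edges M s) \<le> 6 + 2 * x \<and>
      (3 * card (gadget_edges M s) = 6 + 2 * x \<longrightarrow> x = 0 \<or> (x = 3 \<and> (u = 1 \<or> w = 1)))"
    using gadget_count_arith xy u1 w1 y1 both_centres P_and_centre by blast
  moreover have "cross_matched M s = s" if "x = 3"
    using card_subset_eq[OF finite_gadget_set[OF s] cross_matched_subset] card_3[OF s] that
    by (simp add: x_def)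
  moreover have "cross_matched M s = {}" if "x = 0"
    using that finite_subset[OF cross_matched_subset finite_gadget_set[OF s]] by (simp add: x_def)
  ultimately show ?thesis using Uv Wv by blast
qed

lemma card_le_gadget_edges:
  assumes "finite (unionC t S)"
  shows "card M \<le> card {e \<in> M. Pv \<in> e} + (\<Sum>s\<in>unionC t S. card (gadget_edges M s))"
proof -
  have "M \<subseteq> {e \<in> M. Pv \<in> e} \<union> (\<Union>s\<in>unionC t S. gadget_edges M s)"
  proof
    fix e assume "e \<in> M"
    with M_subset G_edges_cases[of e t S]
    show "e \<in> {e \<in> M. Pv \<in> e} \<union> (\<Union>s\<in>unionC t S. gadget_edges M s)"
      unfolding gadget_edges_def P_edges_def cross_matched_def by blast
  qed
  moreover have "{e \<in> M. Pv \<in> e} \<union> (\<Union>s\<in>unionC t S. gadget_edges M s) \<subseteq> M"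
    unfolding gadget_edges_def P_edges_def cross_matched_def by blast
  ultimately have "card M = card ({e \<in> M. Pv \<in> e} \<union> (\<Union>s\<in>unionC t S. gadget_edges M s))"
    by (metis subset_antisym)
  also have "\<dots> \<le> card {e \<in> M. Pv \<in> e} + card (\<Union>s\<in>unionC t S. gadget_edges M s)"
    by (rule card_Un_le)
  also have "\<dots> \<le> card {e \<in> M. Pv \<in> e} + (\<Sum>s\<in>unionC t S. card (gadget_edges M s))"
    using card_UN_le[OF assms] by simp
  finally show ?thesis .
qed

lemma card_UN_cross_matched:
  assumes "finite (unionC t S)"
  shows "card (\<Union>s\<in>unionC t S. cross_matched M s) = (\<Sum>s\<in>unionC t S. card (cross_matched M s))"
proof (rule card_UN_disjoint[OF assms])
  show "\<forall>s\<in>unionC t S. finite (cross_matched M s)"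
    using finite_gadget_set cross_matched_subset finite_subset by blast
  show "\<forall>s\<in>unionC t S. \<forall>s'\<in>unionC t S. s \<noteq> s' \<longrightarrow> cross_matched M s \<inter> cross_matched M s' = {}"
    using cross_matched_unique by blast
qed

lemma large_matching_tight:
  assumes fin: "finite (unionC t S)" "finite X" and sub: "\<And>s. s \<in> unionC t S \<Longrightarrow> s \<subseteq> X"
    and X: "card X = 3 * c" and large: "2 * card (unionC t S) + 2 * c + 1 \<le> card M"
  shows "Pv \<in> \<Union>M"
    and "\<And>s. s \<in> unionC t S \<Longrightarrow> 3 * card (gadget_edges M s) = 6 + 2 * card (cross_matched M s)"
    and "(\<Union>s\<in>unionC t S. cross_matched M s) = X"
proof -
  let ?C = "unionC t S"
  let ?g = "\<lambda>s. 3 * card (gadget_edges M s)" and ?x = "\<lambda>s. card (cross_matched M s)"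
  have gadget: "?g s \<le> 6 + 2 * ?x s" if "s \<in> ?C" for s
    using card_gadget_edges[OF that] by blast
  have UN_sub: "(\<Union>s\<in>?C. cross_matched M s) \<subseteq> X"
    using sub cross_matched_subset by blast
  have sum_x: "(\<Sum>s\<in>?C. ?x s) \<le> 3 * c"
    using card_mono[OF fin(2) UN_sub] card_UN_cross_matched[OF fin(1)] X by simp
  have M_le: "3 * card M \<le> 3 * card {e \<in> M. Pv \<in> e} + (\<Sum>s\<in>?C. ?g s)"
    using card_le_gadget_edges[OF fin(1)] by (simp add: sum_distrib_left[symmetric])
  have g_le: "(\<Sum>s\<in>?C. ?g s) \<le> (\<Sum>s\<in>?C. 6 + 2 * ?x s)"
    using gadget by (rule sum_mono)
  have g_sum: "(\<Sum>s\<in>?C. 6 + 2 * ?x s) = 6 * card ?C + 2 * (\<Sum>s\<in>?C. ?x s)"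
    by (simp add: sum.distrib sum_distrib_left)
  have "card {e \<in> M. Pv \<in> e} \<le> 1"
    using card_matching_edges_at_le_1[OF matching] .
  then have Pv: "card {e \<in> M. Pv \<in> e} = 1" and x: "(\<Sum>s\<in>?C. ?x s) = 3 * c"
    and g: "(\<Sum>s\<in>?C. ?g s) = (\<Sum>s\<in>?C. 6 + 2 * ?x s)"
    using M_le g_le g_sum large sum_x by linarith+
  show "Pv \<in> \<Union>M"
    using Pv by (intro saturated_if_card_edges_at) simp
  show "?g s = 6 + 2 * ?x s" if "s \<in> ?C" for s
    using sum_mono_inv[OF g gadget that fin(1)] .
  show "(\<Union>s\<in>?C. cross_matched M s) = X"
    using card_subset_eq[OF fin(2) UN_sub] card_UN_cross_matched[OF fin(1)] x X by simp
qed

lemma exact_cover_of_large_matching: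
  assumes fin: "finite (unionC t S)" "finite X" and sub: "\<And>s. s \<in> unionC t S \<Longrightarrow> s \<subseteq> X"
    and X: "card X = 3 * c" and large: "2 * card (unionC t S) + 2 * c + 1 \<le> card M"
  shows "\<exists>q\<in>{1..t}. x3c_yes X (S q)"
proof -
  note tight = large_matching_tight[OF fin sub X large]
  obtain e where "e \<in> M" "Pv \<in> e" using tight(1) by blast
  then obtain q where q: "q \<in> {1..t}" "Piv q \<in> \<Union>M"
    using G_edges_PvD M_subset by blast
  define T where "T = {s \<in> unionC t S. cross_matched M s \<noteq> {}}"
  have T: "cross_matched M s = s" "Uv s \<in> \<Union>M \<or> Wv s \<in> \<Union>M" if "s \<in> T" for s
  proof -
    have "s \<in> unionC t S" "cross_matched M s \<noteq> {}" using that by (simp_all add: T_def)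
    then have "cross_matched M s = s \<and> (Uv s \<in> \<Union>M \<or> Wv s \<in> \<Union>M)"
      using card_gadget_edges[of s] tight(2)[of s] by auto
    then show "cross_matched M s = s" "Uv s \<in> \<Union>M \<or> Wv s \<in> \<Union>M" by blast+
  qed
  have "T \<subseteq> S q"
  proof
    fix s assume "s \<in> T"
    then have s: "s \<in> unionC t S" by (simp add: T_def)
    obtain a b where ab: "a \<in> s" "b \<in> s" "a \<noteq> b"
      using card_3[OF s] by (auto simp: card_3_iff)
    have "Iv s a \<in> \<Union>M" "Iv s b \<in> \<Union>M"
      using T(1)[OF \<open>s \<in> T\<close>] ab by (auto simp: cross_matched_def)
    then show "s \<in> S q"
      using T(2)[OF \<open>s \<in> T\<close>] saturated_Piv_gadget_in_instance[OF s q _ _ ab(1-3)] by blast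
  qed
  moreover have "\<Union>T = X"
  proof -
    have "\<Union>T = (\<Union>s\<in>T. cross_matched M s)" using T(1) by simp
    also have "\<dots> = (\<Union>s\<in>unionC t S. cross_matched M s)" unfolding T_def by blast
    finally show ?thesis using tight(3) by simp
  qed
  moreover have "s = s'" if overlap: "s \<in> T" "s' \<in> T" "s \<inter> s' \<noteq> {}" for s s'
  proof -
    obtain a where "a \<in> cross_matched M s" "a \<in> cross_matched M s'" using overlap T(1) by blast
    then show ?thesis by (rule cross_matched_unique)
  qed
  ultimately show ?thesis using q(1) x3c_yesI by blast
qed

end

theorem lemma16:
  fixes c t m :: nat and S :: "nat \<Rightarrow> nat set set"
  assumes three_sets: "\<forall>i\<in>{1..t}. \<forall>s\<in>S i. s \<subseteq> ground c \<and> card s = 3"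
    and same_size: "\<forall>i\<in>{1..t}. card (S i) = m"
    and distinct_inst: "\<forall>i\<in>{1..t}. \<forall>j\<in>{1..t}. i \<noteq> j \<longrightarrow> S i \<noteq> S j"
    and M: "acyclic_matching (G_edges t S) M"
    and size: "card M \<ge> 2 * card (unionC t S) + 2 * c + 1"
  shows "\<exists>q\<in>{1..t}. x3c_yes (ground c) (S q)"
proof -
  have sets: "s \<subseteq> ground c" "card s = 3" if "s \<in> unionC t S" for s
    using three_sets that unfolding unionC_def by blast+
  have finite_C: "finite (unionC t S)"
  proof (rule finite_subset)
    show "unionC t S \<subseteq> Pow (ground c)" using sets(1) by blast
  qed (simp add: ground_def)
  have "finite M"
    using M finite_G_edges[OF finite_C] sets(2) card.infinite finite_subset
    unfolding acyclic_matching_def is_matching_def by (metis zero_neq_numeral)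
  then interpret G_acyclic_matching t S M
    using M sets(2) by unfold_locales
  show ?thesis
    using exact_cover_of_large_matching[OF finite_C _ sets(1)] size by (simp add: ground_def)
qed

end
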